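(* As $N\to\infty$, $$\min\Big\{\big\|\sqrt m-\sqrt n\big\| : 1\le m,n\le N,\ m\ne n,\ \sqrt m\notin\mathbb{Z},\ \sqrt n\notin\mathbb{Z}\Big\}\sim\frac{1}{2N^{3/2}}.$$
   Context: For $x\in\mathbb{R}$, $\|x\|=\min_{k\in\mathbb{Z}}|x-k|$ denotes the distance to the nearest integer. $f(N)\sim g(N)$ means $f(N)/g(N)\to1$. *)

theory Defs
  imports Complex_Main "HOL-Library.Landau_Symbols"
begin

definition dist_int :: "real \<Rightarrow> real" where
  "dist_int x = Inf (range (\<lambda>k::int. \<bar>x - of_int k\<bar>))"

definition min_gap :: "nat \<Rightarrow> real" where
  "min_gap N = Min {dist_int (sqrt (real m) - sqrt (real n)) | m n.
      1 \<le> m \<and> m \<le> N \<and> 1 \<le> n \<and> n \<le> N \<and> m \<noteq> n \<and>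
      sqrt (real m) \<notin> \<int> \<and> sqrt (real n) \<notin> \<int>}"

end

theory Submission
  imports Defs "HOL-Real_Asymp.Real_Asymp"
begin

(* Lower bound: let n < m <= N with sqrt n irrational, k an integer and d = sqrt m - sqrt n - k.
   The norm of d in Q(sqrt m, sqrt n), i.e. the product of the four numbers sqrt m +- sqrt n +- k,
   equals (m - n - k^2)^2 - 4 k^2 n, a nonzero integer because n is not a square (and m <> n).
   If |d| < 1, the three other factors are bounded by 2 (sqrt m + |d|) and (sqrt m + |d|)^2,
   so 1 <= 2 |d| (sqrt N + 1)^3.

   Upper bound: for m = 4a^2 + 2 and n = a^2 + 1 the identity (2a^2 + 1)^2 - 4a^2 (a^2 + 1) = 1
   gives sqrt m - sqrt n - a = 1 / ((sqrt m + sqrt n + a) (2a^2 + 1 + 2a sqrt n)) <= 1 / (16 a^3),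
   and 2a ~ sqrt N turns this into 1 / (2 N^(3/2)) asymptotically. *)

lemma dist_int_le: "dist_int x \<le> \<bar>x - of_int k\<bar>"
  unfolding dist_int_def by (rule cInf_lower) (auto intro: bdd_belowI[where m = 0])

lemma dist_int_greatest:
  assumes "\<And>k. g \<le> \<bar>x - of_int k\<bar>"
  shows "g \<le> dist_int x"
  unfolding dist_int_def by (rule cInf_greatest) (auto intro: assms)

lemma dist_int_uminus [simp]: "dist_int (- x) = dist_int x"
proof -
  have "dist_int x \<le> dist_int (- x)" for x
  proof (rule dist_int_greatest)
    fix k :: int
    have "\<bar>- x - of_int k\<bar> = \<bar>x - of_int (- k)\<bar>"
      by (simp add: abs_minus_commute)
    thus "dist_int x \<le> \<bar>- x - of_int k\<bar>"
      using dist_int_le[of x "- k"] by simp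
  qed
  thus ?thesis
    by (metis antisym minus_minus)
qed

lemma sqrt_of_nat_in_Ints_if_square_multiple:
  fixes a c :: int and n :: nat
  assumes "c \<noteq> 0" and "a\<^sup>2 = c\<^sup>2 * int n"
  shows "sqrt (real n) \<in> \<int>"
proof -
  have "c\<^sup>2 dvd a\<^sup>2"
    unfolding assms(2) by (rule dvd_triv_left)
  hence "c dvd a"
    using pow_divides_pow_iff[of 2 c a] by (simp del: pow_divides_pow_iff)
  then obtain b where "a = c * b" ..
  with assms have "int n = b\<^sup>2"
    by (simp add: power_mult_distrib)
  hence "real n = (of_int \<bar>b\<bar>)\<^sup>2"
    by (metis of_int_eq_iff of_int_of_nat_eq of_int_power power2_abs)
  hence "sqrt (real n) = of_int \<bar>b\<bar>"
    by simp
  thus ?thesis by simp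
qed

lemma sqrt_of_nat_notin_Ints_between_squares:
  fixes a n :: nat
  assumes "a\<^sup>2 < n" and "n < (a + 1)\<^sup>2"
  shows "sqrt (real n) \<notin> \<int>"
proof
  assume "sqrt (real n) \<in> \<int>"
  then obtain z where z: "sqrt (real n) = of_int z"
    by (elim Ints_cases)
  have "real (a\<^sup>2) < real n" and "real n < real ((a + 1)\<^sup>2)"
    using assms by (simp_all only: of_nat_less_iff)
  hence "(real a)\<^sup>2 < real n" and "real n < (real a + 1)\<^sup>2"
    by (simp_all add: add.commute)
  hence "real a < of_int z" and "of_int z < real a + 1"
    unfolding z[symmetric] by (auto intro: real_less_rsqrt real_less_lsqrt)
  hence "int a < z" and "z < int a + 1"
    by linarith+
  thus False by simp
qed

lemma sqrt_conjugates_product_ge_1: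
  fixes m n :: nat and k :: int
  defines "s \<equiv> sqrt (real m)" and "t \<equiv> sqrt (real n)"
  assumes "m \<noteq> n" and "t \<notin> \<int>"
  shows "1 \<le> \<bar>(s - t - k) * (s + t + k) * ((s - t + k) * (s + t - k))\<bar>"
proof -
  define A where "A = int m - int n - k\<^sup>2"
  have "A\<^sup>2 \<noteq> (2 * k)\<^sup>2 * int n"
  proof
    assume A: "A\<^sup>2 = (2 * k)\<^sup>2 * int n"
    show False
    proof (cases "k = 0")
      case True
      with A assms(3) show False
        by (simp add: A_def)
    next
      case False
      with A assms(4) show False
        using sqrt_of_nat_in_Ints_if_square_multiple[of "2 * k" A n] by (simp add: t_def)
    qed
  qed
  hence "1 \<le> \<bar>A\<^sup>2 - (2 * k)\<^sup>2 * int n\<bar>"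
    by linarith
  moreover have "(s - t - k) * (s + t + k) * ((s - t + k) * (s + t - k))
      = of_int (A\<^sup>2 - (2 * k)\<^sup>2 * int n)"
  proof -
    have "s\<^sup>2 = real m" and "t\<^sup>2 = real n"
      by (simp_all add: s_def t_def)
    hence "(s - t - k) * (s + t + k) = A - 2 * k * t" and "(s - t + k) * (s + t - k) = A + 2 * k * t"
      by (simp_all add: A_def algebra_simps power2_eq_square)
    thus ?thesis
      using \<open>t\<^sup>2 = real n\<close> by (simp add: algebra_simps power2_eq_square)
  qed
  ultimately show ?thesis
    by (metis of_int_1_le_iff of_int_abs)
qed

lemma abs_shifted_product_le_square:
  fixes s t d :: real
  assumes "0 \<le> t" and "t \<le> s"
  shows "\<bar>(2 * (s - t) - d) * (2 * t + d)\<bar> \<le> (s + \<bar>d\<bar>)\<^sup>2"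
proof -
  have "\<bar>(2 * (s - t) - d) * (2 * t + d)\<bar> \<le> (2 * (s - t) + \<bar>d\<bar>) * (2 * t + \<bar>d\<bar>)"
    unfolding abs_mult using assms by (intro mult_mono) auto
  also have "\<dots> = (s + \<bar>d\<bar>)\<^sup>2 - (s - 2 * t)\<^sup>2"
    by (simp add: algebra_simps power2_eq_square)
  also have "\<dots> \<le> (s + \<bar>d\<bar>)\<^sup>2"
    by simp
  finally show ?thesis .
qed

lemma sqrt_diff_minus_int_lower_bound:
  fixes m n N :: nat and k :: int
  assumes "n < m" and "m \<le> N" and "sqrt (real n) \<notin> \<int>"
  shows "1 / (2 * (sqrt (real N) + 1) ^ 3) \<le> \<bar>sqrt (real m) - sqrt (real n) - k\<bar>"
proof -
  define s t d where "s = sqrt (real m)" and "t = sqrt (real n)" and "d = s - t - k"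
  have "0 \<le> t" and "t \<le> s" and "s \<le> sqrt (real N)"
    using assms(1,2) by (simp_all add: s_def t_def)
  show ?thesis
  proof (cases "1 \<le> \<bar>d\<bar>")
    case True
    have "1 \<le> (sqrt (real N) + 1) ^ 3"
      by (simp add: one_le_power)
    hence "1 / (2 * (sqrt (real N) + 1) ^ 3) \<le> 1"
      by (subst divide_le_eq_1_pos) linarith+
    with True show ?thesis
      by (simp add: d_def s_def t_def)
  next
    case False
    have "1 \<le> \<bar>d\<bar> * \<bar>s + t + k\<bar> * \<bar>(s - t + k) * (s + t - k)\<bar>"
      using sqrt_conjugates_product_ge_1[of m n k] assms(1,3)
      by (simp add: s_def t_def d_def abs_mult)
    also have "\<dots> \<le> \<bar>d\<bar> * (2 * (s + \<bar>d\<bar>)) * (s + \<bar>d\<bar>)\<^sup>2"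
    proof (intro mult_mono)
      show "\<bar>s + t + k\<bar> \<le> 2 * (s + \<bar>d\<bar>)"
        using \<open>0 \<le> t\<close> \<open>t \<le> s\<close> by (auto simp: d_def abs_le_iff abs_if)
      have "(s - t + k) * (s + t - k) = (2 * (s - t) - d) * (2 * t + d)"
        by (simp add: d_def algebra_simps)
      thus "\<bar>(s - t + k) * (s + t - k)\<bar> \<le> (s + \<bar>d\<bar>)\<^sup>2"
        using abs_shifted_product_le_square[OF \<open>0 \<le> t\<close> \<open>t \<le> s\<close>] by simp
    qed (use \<open>0 \<le> t\<close> \<open>t \<le> s\<close> in auto)
    also have "\<dots> = \<bar>d\<bar> * (2 * (s + \<bar>d\<bar>) ^ 3)"
      by (simp add: power2_eq_square power3_eq_cube)
    also have "\<dots> \<le> \<bar>d\<bar> * (2 * (sqrt (real N) + 1) ^ 3)"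
      using False \<open>0 \<le> t\<close> \<open>t \<le> s\<close> \<open>s \<le> sqrt (real N)\<close>
      by (intro mult_left_mono power_mono) auto
    finally have "1 / (2 * (sqrt (real N) + 1) ^ 3) \<le> \<bar>d\<bar>"
      by (subst pos_divide_le_eq) (simp_all add: add_nonneg_pos)
    thus ?thesis
      by (simp add: d_def s_def t_def)
  qed
qed

lemma dist_int_sqrt_diff_lower_bound:
  fixes m n N :: nat
  assumes "m \<noteq> n" and "m \<le> N" and "n \<le> N"
    and "sqrt (real m) \<notin> \<int>" and "sqrt (real n) \<notin> \<int>"
  shows "1 / (2 * (sqrt (real N) + 1) ^ 3) \<le> dist_int (sqrt (real m) - sqrt (real n))"
proof (cases "n < m")
  case True
  with assms show ?thesis
    by (intro dist_int_greatest sqrt_diff_minus_int_lower_bound)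
next
  case False
  with assms have "1 / (2 * (sqrt (real N) + 1) ^ 3) \<le> dist_int (sqrt (real n) - sqrt (real m))"
    by (intro dist_int_greatest sqrt_diff_minus_int_lower_bound) auto
  thus ?thesis
    using dist_int_uminus[of "sqrt (real n) - sqrt (real m)"] by simp
qed

lemma dist_int_sqrt_pair_le:
  fixes a :: nat
  assumes "1 \<le> a"
  shows "dist_int (sqrt (real (4 * a\<^sup>2 + 2)) - sqrt (real (a\<^sup>2 + 1))) \<le> 1 / (16 * real a ^ 3)"
proof -
  define p q where "p = sqrt (real (4 * a\<^sup>2 + 2))" and "q = sqrt (real (a\<^sup>2 + 1))"
  define D E where "D = p + q + a" and "E = 2 * a\<^sup>2 + 1 + 2 * a * q"
  have "p\<^sup>2 = 4 * a\<^sup>2 + 2" and "q\<^sup>2 = a\<^sup>2 + 1"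
    by (simp_all add: p_def q_def)
  have "2 * a \<le> p" and "a \<le> q"
    by (simp_all add: p_def q_def real_le_rsqrt power_mult_distrib)
  have "(p - q - a) * D = 2 * a\<^sup>2 + 1 - 2 * a * q"
    using \<open>p\<^sup>2 = _\<close> \<open>q\<^sup>2 = _\<close> by (simp add: D_def algebra_simps power2_eq_square)
  moreover have "(2 * a\<^sup>2 + 1 - 2 * a * q) * E = 1"
  proof -
    have "(2 * a\<^sup>2 + 1 - 2 * a * q) * E = (2 * a\<^sup>2 + 1)\<^sup>2 - 4 * a\<^sup>2 * q\<^sup>2"
      by (simp add: E_def algebra_simps power2_eq_square)
    also have "\<dots> = 1"
      unfolding \<open>q\<^sup>2 = _\<close> by (simp add: algebra_simps power2_eq_square)
    finally show ?thesis .
  qed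
  ultimately have "(p - q - a) * (D * E) = 1"
    by (metis mult.assoc)
  have "4 * a \<le> D" and "4 * a\<^sup>2 \<le> E"
    using \<open>2 * a \<le> p\<close> \<open>a \<le> q\<close> mult_left_mono[OF \<open>a \<le> q\<close>, of "2 * a"]
    by (simp_all add: D_def E_def power2_eq_square)
  hence "16 * real a ^ 3 \<le> D * E"
    using mult_mono[of "4 * real a" D "4 * a\<^sup>2" E] by (simp add: power2_eq_square power3_eq_cube)
  moreover have "0 < 16 * real a ^ 3"
    using assms by simp
  ultimately have "p - q - a = 1 / (D * E)"
    using \<open>(p - q - a) * (D * E) = 1\<close> by (auto simp: eq_divide_eq)
  with \<open>16 * real a ^ 3 \<le> D * E\<close> \<open>0 < 16 * real a ^ 3\<close>
  have "\<bar>p - q - of_int (int a)\<bar> \<le> 1 / (16 * real a ^ 3)"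
    by (simp add: frac_le)
  thus ?thesis
    using dist_int_le[of "p - q" "int a"] by (simp add: p_def q_def)
qed

definition gap_pairs :: "nat \<Rightarrow> (nat \<times> nat) set" where
  "gap_pairs N = {(m, n). 1 \<le> m \<and> m \<le> N \<and> 1 \<le> n \<and> n \<le> N \<and> m \<noteq> n \<and>
      sqrt (real m) \<notin> \<int> \<and> sqrt (real n) \<notin> \<int>}"

lemma min_gap_eq_Min_gap_pairs:
  "min_gap N = Min ((\<lambda>(m, n). dist_int (sqrt (real m) - sqrt (real n))) ` gap_pairs N)"
  unfolding min_gap_def gap_pairs_def by (rule arg_cong[where f = Min]) auto

lemma finite_gap_pairs: "finite (gap_pairs N)"
  by (rule finite_subset[of _ "{1..N} \<times> {1..N}"]) (auto simp: gap_pairs_def)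

lemma min_gap_le:
  assumes "(m, n) \<in> gap_pairs N"
  shows "min_gap N \<le> dist_int (sqrt (real m) - sqrt (real n))"
  unfolding min_gap_eq_Min_gap_pairs using assms finite_gap_pairs
  by (intro Min_le) auto

lemma min_gap_greatest:
  assumes "gap_pairs N \<noteq> {}"
    and "\<And>m n. (m, n) \<in> gap_pairs N \<Longrightarrow> g \<le> dist_int (sqrt (real m) - sqrt (real n))"
  shows "g \<le> min_gap N"
  unfolding min_gap_eq_Min_gap_pairs using assms finite_gap_pairs
  by (subst Min_ge_iff) auto

lemma min_gap_lower_bound:
  assumes "3 \<le> N"
  shows "1 / (2 * (sqrt (real N) + 1) ^ 3) \<le> min_gap N"
proof (rule min_gap_greatest)
  have "sqrt (real 2) \<notin> \<int>" and "sqrt (real 3) \<notin> \<int>"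
    by (rule sqrt_of_nat_notin_Ints_between_squares[of 1]; simp add: power2_eq_square)+
  with assms show "gap_pairs N \<noteq> {}"
    unfolding gap_pairs_def by (intro ex_in_conv[THEN iffD1] exI[of _ "(3, 2)"]) simp
qed (auto simp: gap_pairs_def intro: dist_int_sqrt_diff_lower_bound)

lemma min_gap_le_sqrt_pair:
  fixes a N :: nat
  assumes "1 \<le> a" and "4 * a\<^sup>2 + 2 \<le> N"
  shows "min_gap N \<le> 1 / (16 * real a ^ 3)"
proof -
  have "sqrt (real (4 * a\<^sup>2 + 2)) \<notin> \<int>"
    using assms(1) by (intro sqrt_of_nat_notin_Ints_between_squares[of "2 * a"]) (auto simp: power2_eq_square)
  moreover have "sqrt (real (a\<^sup>2 + 1)) \<notin> \<int>"
    using assms(1) by (intro sqrt_of_nat_notin_Ints_between_squares[of a]) (auto simp: power2_eq_square)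
  ultimately have "(4 * a\<^sup>2 + 2, a\<^sup>2 + 1) \<in> gap_pairs N"
    using assms by (auto simp: gap_pairs_def)
  thus ?thesis
    using min_gap_le dist_int_sqrt_pair_le[OF assms(1)] by (blast intro: order.trans)
qed

lemma min_gap_upper_bound:
  fixes N :: nat
  assumes "7 \<le> N"
  shows "min_gap N \<le> 1 / (2 * (sqrt (real N - 2) - 2) ^ 3)"
proof -
  define r where "r = sqrt (real N - 2)"
  define a where "a = nat \<lfloor>r / 2\<rfloor>"
  have "2 < r"
    using assms by (simp add: r_def real_less_rsqrt)
  hence "1 \<le> a" and "real a \<le> r / 2" and "r / 2 - 1 < real a"
    by (simp_all add: a_def le_nat_iff le_floor_iff) linarith+
  have "(2 * real a)\<^sup>2 \<le> r\<^sup>2"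
    using \<open>real a \<le> r / 2\<close> by (intro power_mono) simp_all
  hence "real (4 * a\<^sup>2 + 2) \<le> real N"
    using assms by (simp add: r_def power_mult_distrib)
  hence "4 * a\<^sup>2 + 2 \<le> N"
    by (simp only: of_nat_le_iff)
  have "(r - 2) ^ 3 \<le> (2 * real a) ^ 3"
    using \<open>2 < r\<close> \<open>r / 2 - 1 < real a\<close> by (intro power_mono) simp_all
  hence "2 * (r - 2) ^ 3 \<le> 16 * real a ^ 3"
    by (simp add: power_mult_distrib)
  hence "1 / (16 * real a ^ 3) \<le> 1 / (2 * (r - 2) ^ 3)"
    using \<open>2 < r\<close> \<open>1 \<le> a\<close> by (intro divide_left_mono) simp_all
  thus ?thesis
    using min_gap_le_sqrt_pair[OF \<open>1 \<le> a\<close> \<open>4 * a\<^sup>2 + 2 \<le> N\<close>] by (simp add: r_def)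
qed

theorem theorem7:
  shows "min_gap \<sim>[at_top] (\<lambda>N. 1 / (2 * real N powr (3/2)))"
proof (rule asymp_equiv_sandwich_real)
  show "(\<lambda>N. 1 / (2 * (sqrt (real N) + 1) ^ 3)) \<sim>[at_top] (\<lambda>N. 1 / (2 * real N powr (3/2)))"
    by real_asymp
  show "(\<lambda>N. 1 / (2 * (sqrt (real N - 2) - 2) ^ 3)) \<sim>[at_top] (\<lambda>N. 1 / (2 * real N powr (3/2)))"
    by real_asymp
  show "\<forall>\<^sub>F N in at_top. min_gap N \<in> {1 / (2 * (sqrt (real N) + 1) ^ 3) ..
      1 / (2 * (sqrt (real N - 2) - 2) ^ 3)}"
    using eventually_ge_at_top[of 7]
    by eventually_elim (simp add: min_gap_lower_bound min_gap_upper_bound)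
qed

end
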